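(* Let $\omega\in\mathbb R\setminus\mathbb Z$ and let $(q^n)$ be a sequence in $\Lambda$ such that every component satisfies $\int_0^{2\pi}z^n_i(t)\,dt=0$ for all $i\in\mathbf N$ and all $n$. If $\|q^n\|_{H^1(\mathbb R/2\pi\mathbb Z)}\to\infty$, then $\mathcal A_\omega(q^n;2\pi)\to\infty$.
   Context: Fix $N\ge2$ and $\mathbf N=\{0,\dots,N-1\}$. Positions are $q_i=(x_i,y_i,z_i)=(\zeta_i,z_i)$ with $\zeta_i=x_i+\mathrm iy_i$. - Loop space: $\Lambda=H^1(\mathbb R/2\pi\mathbb Z,\mathbb R^{3N})$. - Potential: $U(q)=\sum_{i<j}1/|q_i-q_j|$ (taken as $+\infty$ at collisions). - Rotating-frame action: $\mathcal A_\omega(q;T)=\int_0^T\big(\tfrac12\sum_i(|\dot\zeta_i+\mathrm i\omega\zeta_i|^2+\dot z_i^2)+U(q)\big)dt$. *)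

theory Defs
  imports "HOL-Analysis.Analysis"
begin

text \<open>A loop q in Lambda is encoded coordinate-wise: q i k t is the k-th coordinate
  (k = 0,1,2 for x,y,z) of body i at time t; dq i k is its weak derivative.\<close>

definition H1per :: "(real \<Rightarrow> real) \<Rightarrow> (real \<Rightarrow> real) \<Rightarrow> bool" where
  "H1per f g \<longleftrightarrow> (\<forall>t. f (t + 2*pi) = f t) \<and> (\<forall>t. g (t + 2*pi) = g t) \<and>
     g \<in> borel_measurable borel \<and>
     set_integrable lborel {0..2*pi} (\<lambda>t. (g t)^2) \<and>
     (\<forall>t. f t = f 0 + (LBINT s=0..t. g s))"

definition in_Lambda :: "nat \<Rightarrow> (nat \<Rightarrow> nat \<Rightarrow> real \<Rightarrow> real) \<Rightarrow> (nat \<Rightarrow> nat \<Rightarrow> real \<Rightarrow> real) \<Rightarrow> bool" where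
  "in_Lambda N q dq \<longleftrightarrow> (\<forall>i<N. \<forall>k<3. H1per (q i k) (dq i k))"

definition H1norm :: "nat \<Rightarrow> (nat \<Rightarrow> nat \<Rightarrow> real \<Rightarrow> real) \<Rightarrow> (nat \<Rightarrow> nat \<Rightarrow> real \<Rightarrow> real) \<Rightarrow> real" where
  "H1norm N q dq = sqrt (\<Sum>i<N. \<Sum>k<3. (LBINT t=0..2*pi. (q i k t)^2 + (dq i k t)^2))"

definition dist3 :: "(nat \<Rightarrow> nat \<Rightarrow> real \<Rightarrow> real) \<Rightarrow> nat \<Rightarrow> nat \<Rightarrow> real \<Rightarrow> real" where
  "dist3 q i j t = sqrt (\<Sum>k<3. (q i k t - q j k t)^2)"

definition potential :: "nat \<Rightarrow> (nat \<Rightarrow> nat \<Rightarrow> real \<Rightarrow> real) \<Rightarrow> real \<Rightarrow> ennreal" where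
  "potential N q t =
     (if \<exists>i<N. \<exists>j<N. i < j \<and> dist3 q i j t = 0 then top
      else ennreal (\<Sum>i<N. \<Sum>j\<in>{i<..<N}. 1 / dist3 q i j t))"

definition kinetic :: "real \<Rightarrow> nat \<Rightarrow> (nat \<Rightarrow> nat \<Rightarrow> real \<Rightarrow> real) \<Rightarrow> (nat \<Rightarrow> nat \<Rightarrow> real \<Rightarrow> real) \<Rightarrow> real \<Rightarrow> real" where
  "kinetic \<omega> N q dq t = (1/2) * (\<Sum>i<N.
      (cmod (Complex (dq i 0 t) (dq i 1 t) + \<i> * complex_of_real \<omega> * Complex (q i 0 t) (q i 1 t)))^2
      + (dq i 2 t)^2)"

definition action :: "real \<Rightarrow> nat \<Rightarrow> (nat \<Rightarrow> nat \<Rightarrow> real \<Rightarrow> real) \<Rightarrow> (nat \<Rightarrow> nat \<Rightarrow> real \<Rightarrow> real) \<Rightarrow> real \<Rightarrow> ennreal" where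
  "action \<omega> N q dq T =
     (\<integral>\<^sup>+ t. (ennreal (kinetic \<omega> N q dq t) + potential N q t) * indicator {0..T} t \<partial>lborel)"

end

theory Submission
  imports Defs
begin

text \<open>Write \<zeta> = x + i y for the planar part of one body. Then u(t) = e^(i\<omega>t) \<zeta>(t) has derivative
  e^(i\<omega>t) (\<zeta>' + i\<omega>\<zeta>), whose modulus is the rotating-frame speed, and periodicity of \<zeta> gives
  u(2\<pi>) = e^(2\<pi>i\<omega>) u(0). For \<omega> \<notin> \<int> this monodromy factor differs from 1, so |\<zeta>(t)| is bounded
  by the L^1 norm of the rotating-frame velocity, hence by Cauchy-Schwarz by the kinetic energy;
  then \<zeta>' = (\<zeta>' + i\<omega>\<zeta>) - i\<omega>\<zeta> is controlled as well. The vertical coordinate has zero mean, so a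
  Poincare-Wirtinger estimate bounds it by the integral of z'^2. Altogether the squared H^1 norm is at
  most a constant times the kinetic part of the action, and the potential is nonnegative.\<close>

lemma set_integrable_of_square:
  fixes g :: "real \<Rightarrow> real"
  assumes "g \<in> borel_measurable borel" "set_integrable lborel {a..b} (\<lambda>t. (g t)^2)"
  shows "set_integrable lborel {a..b} g"
proof (rule set_integrable_bound)
  show "set_integrable lborel {a..b} (\<lambda>t. 1 + (g t)^2)"
    using assms(2) by (intro set_integral_add) (auto intro: borel_integrable_atLeastAtMost' continuous_on_const)
  show "set_borel_measurable lborel {a..b} g"
    using assms(1) unfolding set_borel_measurable_def by measurable
  have "\<bar>u\<bar> \<le> 1 + u^2" for u :: real
    using zero_le_power2[of "\<bar>u\<bar> - 1"] by (simp add: power2_diff)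
  then show "AE t in lborel. t \<in> {a..b} \<longrightarrow> norm (g t) \<le> norm (1 + (g t)^2)"
    by auto
qed

lemma (in pair_sigma_finite) integrable_scaleR_pair:
  fixes f :: "_ \<Rightarrow> 'c::{banach, second_countable_topology}" and g :: "_ \<Rightarrow> real"
  assumes f: "integrable M1 f" and g: "integrable M2 g"
  shows "integrable (M1 \<Otimes>\<^sub>M M2) (\<lambda>(x, y). g y *\<^sub>R f x)"
proof (rule Fubini_integrable)
  have [measurable]: "f \<in> borel_measurable M1" "g \<in> borel_measurable M2"
    using f g by auto
  show "(\<lambda>(x, y). g y *\<^sub>R f x) \<in> borel_measurable (M1 \<Otimes>\<^sub>M M2)"
    by measurable
  show "integrable M1 (\<lambda>x. \<integral>y. norm (case (x, y) of (x, y) \<Rightarrow> g y *\<^sub>R f x) \<partial>M2)"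
    using f by simp
  show "AE x in M1. integrable M2 (\<lambda>y. case (x, y) of (x, y) \<Rightarrow> g y *\<^sub>R f x)"
    using g by simp
qed

lemma set_integral_primitive_scaleR:
  fixes g :: "real \<Rightarrow> real" and h :: "real \<Rightarrow> 'a::{banach, second_countable_topology}"
  assumes g: "set_integrable lborel {a..b} g" and h: "continuous_on {a..b} h"
  shows "(LBINT s:{a..b}. (LBINT r:{a..s}. g r) *\<^sub>R h s) = (LBINT r:{a..b}. g r *\<^sub>R (LBINT s:{r..b}. h s))"
proof -
  define G where "G r = indicator {a..b} r * g r" for r
  define H where "H s = indicator {a..b} s *\<^sub>R h s" for s
  define F where "F s r = (if r \<le> s then G r *\<^sub>R H s else 0)" for s r
  have G: "integrable lborel G"
    using g unfolding set_integrable_def G_def by simp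
  have H: "integrable lborel H"
    using borel_integrable_atLeastAtMost'[OF h] unfolding set_integrable_def H_def .
  have [measurable]: "G \<in> borel_measurable borel" "H \<in> borel_measurable borel"
    using G H by auto
  have F: "integrable (lborel \<Otimes>\<^sub>M lborel) (case_prod F)"
  proof (rule Bochner_Integration.integrable_bound[OF lborel_pair.integrable_scaleR_pair[OF H G]])
    show "case_prod F \<in> borel_measurable (lborel \<Otimes>\<^sub>M lborel)"
      unfolding F_def by measurable
  qed (auto simp: F_def)
  have inner_r: "(\<integral>r. F s r \<partial>lborel) = indicator {a..b} s *\<^sub>R ((LBINT r:{a..s}. g r) *\<^sub>R h s)" for s
  proof (cases "s \<in> {a..b}")
    case True
    then have "(\<integral>r. F s r \<partial>lborel) = (\<integral>r. (indicator {a..s} r * g r) *\<^sub>R h s \<partial>lborel)"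
      by (intro Bochner_Integration.integral_cong) (auto simp: F_def G_def H_def indicator_def)
    moreover have "set_integrable lborel {a..s} g"
      using True by (intro set_integrable_subset[OF g]) auto
    ultimately show ?thesis
      using True by (simp add: set_lebesgue_integral_def set_integrable_def)
  next
    case False
    then have "F s = (\<lambda>r. 0)"
      by (auto simp: F_def H_def)
    then show ?thesis
      using False by simp
  qed
  have inner_s: "(\<integral>s. F s r \<partial>lborel) = indicator {a..b} r *\<^sub>R (g r *\<^sub>R (LBINT s:{r..b}. h s))" for r
  proof (cases "r \<in> {a..b}")
    case True
    then have "(\<integral>s. F s r \<partial>lborel) = (\<integral>s. g r *\<^sub>R (indicator {r..b} s *\<^sub>R h s) \<partial>lborel)"
      by (intro Bochner_Integration.integral_cong) (auto simp: F_def G_def H_def indicator_def)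
    then show ?thesis
      using True by (simp add: set_lebesgue_integral_def del: scaleR_scaleR)
  next
    case False
    then have "(\<lambda>s. F s r) = (\<lambda>s. 0)"
      by (auto simp: F_def G_def)
    then show ?thesis
      using False by simp
  qed
  show ?thesis
    using lborel_pair.Fubini_integral[OF F]
    unfolding inner_r inner_s set_lebesgue_integral_def by simp
qed

lemma set_integrable_scaleR_continuous:
  fixes g :: "real \<Rightarrow> real" and h :: "real \<Rightarrow> 'a::{banach, second_countable_topology}"
  assumes g: "set_integrable lborel {a..b} g" and h: "continuous_on {a..b} h"
  shows "set_integrable lborel {a..b} (\<lambda>s. g s *\<^sub>R h s)"
proof -
  obtain M where M: "\<And>s. s \<in> {a..b} \<Longrightarrow> norm (h s) \<le> M"
    using compact_imp_bounded[OF compact_continuous_image[OF h compact_Icc]]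
    unfolding bounded_iff by fastforce
  have [measurable]: "(\<lambda>s. indicator {a..b} s *\<^sub>R g s) \<in> borel_measurable borel"
    using g unfolding set_integrable_def by auto
  have [measurable]: "(\<lambda>s. indicator {a..b} s *\<^sub>R h s) \<in> borel_measurable borel"
    by (rule borel_measurable_continuous_on_indicator[OF _ h]) simp
  show ?thesis
  proof (rule set_integrable_bound)
    show "set_integrable lborel {a..b} (\<lambda>s. M * g s)"
      using g by simp
    have "(\<lambda>s. (indicator {a..b} s *\<^sub>R g s) *\<^sub>R (indicator {a..b} s *\<^sub>R h s)) \<in> borel_measurable borel"
      by measurable
    moreover have "(\<lambda>s. (indicator {a..b} s *\<^sub>R g s) *\<^sub>R (indicator {a..b} s *\<^sub>R h s))
        = (\<lambda>s. indicator {a..b} s *\<^sub>R (g s *\<^sub>R h s))"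
      by (auto simp: indicator_def)
    ultimately show "set_borel_measurable lborel {a..b} (\<lambda>s. g s *\<^sub>R h s)"
      unfolding set_borel_measurable_def by simp
    show "AE s in lborel. s \<in> {a..b} \<longrightarrow> norm (g s *\<^sub>R h s) \<le> norm (M * g s)"
    proof (intro AE_I2 impI)
      fix s assume "s \<in> {a..b}"
      then have "norm (h s) * \<bar>g s\<bar> \<le> M * \<bar>g s\<bar>"
        using M by (intro mult_right_mono) auto
      also have "\<dots> \<le> \<bar>M\<bar> * \<bar>g s\<bar>"
        by (intro mult_right_mono) auto
      finally show "norm (g s *\<^sub>R h s) \<le> norm (M * g s)"
        by (simp add: abs_mult mult.commute)
    qed
  qed
qed

lemma continuous_on_primitive:
  fixes f g :: "real \<Rightarrow> real"
  assumes g: "set_integrable lborel {a..b} g"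
    and f: "\<And>t. t \<in> {a..b} \<Longrightarrow> f t = f a + (LBINT s:{a..t}. g s)"
  shows "continuous_on {a..b} f"
proof -
  have "continuous_on {a..b} (\<lambda>t. f a + integral {a..t} g)"
    using indefinite_integral_continuous_1[OF set_borel_integral_eq_integral(1)[OF g]]
    by (intro continuous_intros)
  moreover have "f a + integral {a..t} g = f t" if "t \<in> {a..b}" for t
    using f[OF that] set_borel_integral_eq_integral(2)[OF set_integrable_subset[OF g]] that by simp
  ultimately show ?thesis
    by (rule continuous_on_cong[THEN iffD1, OF refl, rotated]) simp
qed

lemma set_integral_FTC_Icc:
  fixes \<phi> \<phi>' :: "real \<Rightarrow> 'a::euclidean_space"
  assumes "a \<le> b" and "\<And>t. (\<phi> has_vector_derivative \<phi>' t) (at t)" and "continuous_on {a..b} \<phi>'"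
  shows "(LBINT s:{a..b}. \<phi>' s) = \<phi> b - \<phi> a"
  unfolding set_lebesgue_integral_def
  by (rule integral_FTC_atLeastAtMost[OF assms(1) _ assms(3)]) (rule has_vector_derivative_at_within[OF assms(2)])

lemma set_integral_product_rule:
  fixes f g :: "real \<Rightarrow> real" and \<phi> \<phi>' :: "real \<Rightarrow> 'a::euclidean_space"
  assumes ab: "a \<le> b"
    and g: "set_integrable lborel {a..b} g"
    and f: "\<And>t. t \<in> {a..b} \<Longrightarrow> f t = f a + (LBINT s:{a..t}. g s)"
    and \<phi>: "\<And>t. (\<phi> has_vector_derivative \<phi>' t) (at t)"
    and \<phi>'_cont: "continuous_on UNIV \<phi>'"
  shows "set_integrable lborel {a..b} (\<lambda>s. g s *\<^sub>R \<phi> s + f s *\<^sub>R \<phi>' s)"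
    and "(LBINT s:{a..b}. g s *\<^sub>R \<phi> s + f s *\<^sub>R \<phi>' s) = f b *\<^sub>R \<phi> b - f a *\<^sub>R \<phi> a"
proof -
  have f_cont: "continuous_on {a..b} f"
    using g f by (rule continuous_on_primitive)
  have \<phi>_cont: "continuous_on {a..b} \<phi>"
    using \<phi> by (meson continuous_at_imp_continuous_on has_vector_derivative_continuous)
  have \<phi>'_cont_on: "continuous_on S \<phi>'" for S
    using \<phi>'_cont by (rule continuous_on_subset) simp
  have FTC: "(LBINT s:{r..b}. \<phi>' s) = \<phi> b - \<phi> r" if "r \<le> b" for r
    using that \<phi> \<phi>'_cont_on by (rule set_integral_FTC_Icc)
  have ig: "set_integrable lborel {a..b} (\<lambda>s. g s *\<^sub>R \<phi> s)"
    by (rule set_integrable_scaleR_continuous[OF g \<phi>_cont])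
  have if': "set_integrable lborel {a..b} (\<lambda>s. f s *\<^sub>R \<phi>' s)"
    by (intro borel_integrable_atLeastAtMost' continuous_intros f_cont \<phi>'_cont_on)
  have i\<phi>': "set_integrable lborel {a..b} (\<lambda>s. f a *\<^sub>R \<phi>' s)"
    by (intro borel_integrable_atLeastAtMost' continuous_intros \<phi>'_cont_on)
  have ig\<phi>b: "set_integrable lborel {a..b} (\<lambda>s. g s *\<^sub>R \<phi> b)"
    using g by (rule set_integrable_scaleR_left)
  show "set_integrable lborel {a..b} (\<lambda>s. g s *\<^sub>R \<phi> s + f s *\<^sub>R \<phi>' s)"
    using ig if' by (rule set_integral_add)
  have "(LBINT s:{a..b}. f s *\<^sub>R \<phi>' s) - f a *\<^sub>R (\<phi> b - \<phi> a)
      = (LBINT s:{a..b}. f s *\<^sub>R \<phi>' s - f a *\<^sub>R \<phi>' s)"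
    using set_integral_diff(2)[OF if' i\<phi>'] FTC[OF ab] by simp
  also have "\<dots> = (LBINT s:{a..b}. (LBINT r:{a..s}. g r) *\<^sub>R \<phi>' s)"
  proof (intro set_lebesgue_integral_cong allI impI)
    fix s assume "s \<in> {a..b}"
    then have "f s - f a = (LBINT r:{a..s}. g r)"
      using f[of s] by linarith
    then show "f s *\<^sub>R \<phi>' s - f a *\<^sub>R \<phi>' s = (LBINT r:{a..s}. g r) *\<^sub>R \<phi>' s"
      by (simp flip: scaleR_diff_left)
  qed simp
  also have "\<dots> = (LBINT r:{a..b}. g r *\<^sub>R (LBINT s:{r..b}. \<phi>' s))"
    by (rule set_integral_primitive_scaleR[OF g \<phi>'_cont_on])
  also have "\<dots> = (LBINT r:{a..b}. g r *\<^sub>R \<phi> b - g r *\<^sub>R \<phi> r)"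
    using FTC by (intro set_lebesgue_integral_cong) (simp_all flip: scaleR_diff_right)
  also have "\<dots> = (f b - f a) *\<^sub>R \<phi> b - (LBINT r:{a..b}. g r *\<^sub>R \<phi> r)"
  proof -
    have "(LBINT r:{a..b}. g r *\<^sub>R \<phi> b) = (LBINT r:{a..b}. g r) *\<^sub>R \<phi> b"
      using g by (simp add: set_lebesgue_integral_def set_integrable_def)
    also have "(LBINT r:{a..b}. g r) = f b - f a"
      using f[of b] ab by simp
    finally show ?thesis
      using set_integral_diff(2)[OF ig\<phi>b ig] by simp
  qed
  finally show "(LBINT s:{a..b}. g s *\<^sub>R \<phi> s + f s *\<^sub>R \<phi>' s) = f b *\<^sub>R \<phi> b - f a *\<^sub>R \<phi> a"
    using set_integral_add(2)[OF ig if'] by (simp add: algebra_simps)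
qed

lemma norm_set_integral_split_le:
  fixes V :: "real \<Rightarrow> 'a::{banach, second_countable_topology}"
  assumes V: "set_integrable lborel {a..b} V" and t: "t \<in> {a..b}"
  shows "norm (LBINT s:{a..t}. V s) + norm ((LBINT s:{a..b}. V s) - (LBINT s:{a..t}. V s))
    \<le> (LBINT s:{a..b}. norm (V s))"
proof -
  have ab: "{a..b} = {a..t} \<union> {t<..b}" and disj: "{a..t} \<inter> {t<..b} = {}"
    using t by auto
  have V1: "set_integrable lborel {a..t} V" and V2: "set_integrable lborel {t<..b} V"
    using t by (auto intro: set_integrable_subset[OF V])
  have split: "(LBINT s:{a..b}. W s) = (LBINT s:{a..t}. W s) + (LBINT s:{t<..b}. W s)"
    if "set_integrable lborel {a..t} W" "set_integrable lborel {t<..b} W"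
    for W :: "real \<Rightarrow> 'b::{banach, second_countable_topology}"
    unfolding ab using disj that by (rule set_integral_Un)
  have "norm (LBINT s:{a..t}. V s) + norm ((LBINT s:{a..b}. V s) - (LBINT s:{a..t}. V s))
      = norm (LBINT s:{a..t}. V s) + norm (LBINT s:{t<..b}. V s)"
    using split[OF V1 V2] by simp
  also have "\<dots> \<le> (LBINT s:{a..t}. norm (V s)) + (LBINT s:{t<..b}. norm (V s))"
    using set_integral_norm_bound[OF V1] set_integral_norm_bound[OF V2] by (rule add_mono)
  also have "\<dots> = (LBINT s:{a..b}. norm (V s))"
    using split[OF set_integrable_norm[OF V1] set_integrable_norm[OF V2]] by simp
  finally show ?thesis .
qed

lemma square_set_integral_le:
  fixes h :: "real \<Rightarrow> real"
  assumes ab: "a < b"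
    and h: "set_integrable lborel {a..b} h" and h2: "set_integrable lborel {a..b} (\<lambda>s. (h s)^2)"
  shows "(LBINT s:{a..b}. h s)^2 \<le> (b - a) * (LBINT s:{a..b}. (h s)^2)"
proof -
  define d where "d = b - a"
  define I where "I = (LBINT s:{a..b}. h s)"
  define m where "m = I / d"
  have d: "0 < d"
    using ab by (simp add: d_def)
  have ic: "set_integrable lborel {a..b} (\<lambda>s. m^2)"
    by (rule borel_integrable_atLeastAtMost') (rule continuous_on_const)
  have i2m: "set_integrable lborel {a..b} (\<lambda>s. 2 * m * h s)"
    using h by simp
  \<comment> \<open>expand the variance of \<open>h\<close> around its mean \<open>m\<close>\<close>
  have "0 \<le> (LBINT s:{a..b}. (h s - m)^2)"
    unfolding set_lebesgue_integral_def by (rule integral_nonneg_AE) (auto simp: indicator_def)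
  also have "\<dots> = (LBINT s:{a..b}. ((h s)^2 - 2 * m * h s) + m^2)"
    by (simp add: power2_diff algebra_simps)
  also have "\<dots> = (LBINT s:{a..b}. (h s)^2) - 2 * m * I + d * m^2"
    using set_integral_add(2)[OF set_integral_diff(1)[OF h2 i2m] ic] set_integral_diff(2)[OF h2 i2m] ab
    by (simp add: I_def d_def set_integral_const)
  also have "\<dots> = (LBINT s:{a..b}. (h s)^2) - I^2 / d"
    using d by (simp add: m_def power2_eq_square field_simps)
  finally show ?thesis
    using d by (simp add: I_def d_def field_simps)
qed

lemma set_integrable_square_add_continuous:
  fixes g \<phi> :: "real \<Rightarrow> real"
  assumes g: "g \<in> borel_measurable borel" "set_integrable lborel {a..b} (\<lambda>s. (g s)^2)"
    and \<phi>: "continuous_on {a..b} \<phi>"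
  shows "set_integrable lborel {a..b} (\<lambda>s. (g s + \<phi> s)^2)"
proof -
  have "set_integrable lborel {a..b} (\<lambda>s. g s * \<phi> s)"
    using set_integrable_scaleR_continuous[OF set_integrable_of_square[OF g] \<phi>] by simp
  moreover have "set_integrable lborel {a..b} (\<lambda>s. (\<phi> s)^2)"
    by (intro borel_integrable_atLeastAtMost' continuous_intros \<phi>)
  ultimately have "set_integrable lborel {a..b} (\<lambda>s. (g s)^2 + (2 * (g s * \<phi> s) + (\<phi> s)^2))"
    using g(2) by (intro set_integral_add set_integrable_mult_right)
  then show ?thesis
    by (simp add: power2_sum algebra_simps)
qed

lemma H1per_deriv_measurable: "H1per f g \<Longrightarrow> g \<in> borel_measurable borel"
  unfolding H1per_def by (elim conjE)

lemma H1per_set_integrable_deriv_square: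
  "H1per f g \<Longrightarrow> set_integrable lborel {0..2*pi} (\<lambda>t. (g t)^2)"
  unfolding H1per_def by (elim conjE)

lemma H1per_set_integrable_deriv: "H1per f g \<Longrightarrow> set_integrable lborel {0..2*pi} g"
  by (rule set_integrable_of_square[OF H1per_deriv_measurable H1per_set_integrable_deriv_square])

lemma H1per_eq_primitive:
  assumes "H1per f g" "t \<in> {0..2*pi}"
  shows "f t = f 0 + (LBINT s:{0..t}. g s)"
proof -
  have "f t = f 0 + (LBINT s=0..t. g s)"
    using assms(1) unfolding H1per_def by (elim conjE allE)
  then show ?thesis
    using assms(2) interval_integral_Icc[of 0 t g] by (simp add: zero_ereal_def)
qed

lemma H1per_continuous_on: "H1per f g \<Longrightarrow> continuous_on {0..2*pi} f"
  by (rule continuous_on_primitive[OF H1per_set_integrable_deriv H1per_eq_primitive])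

lemma H1per_periodic: "H1per f g \<Longrightarrow> f (2*pi) = f 0"
  unfolding H1per_def by (metis add_0)

lemma H1per_set_integrable_square_add:
  "H1per f g \<Longrightarrow> continuous_on {0..2*pi} \<phi> \<Longrightarrow> set_integrable lborel {0..2*pi} (\<lambda>t. (g t + \<phi> t)^2)"
  by (rule set_integrable_square_add_continuous[OF H1per_deriv_measurable H1per_set_integrable_deriv_square])

lemma H1per_set_integrable_energy:
  "H1per f g \<Longrightarrow> set_integrable lborel {0..2*pi} (\<lambda>t. (f t)^2 + (g t)^2)"
  by (intro set_integral_add borel_integrable_atLeastAtMost' continuous_intros
      H1per_continuous_on H1per_set_integrable_deriv_square)

definition rotating_velocity ::
  "real \<Rightarrow> (real \<Rightarrow> real) \<Rightarrow> (real \<Rightarrow> real) \<Rightarrow> (real \<Rightarrow> real) \<Rightarrow> (real \<Rightarrow> real) \<Rightarrow> real \<Rightarrow> complex"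
  where "rotating_velocity \<omega> x y dx dy t = Complex (dx t) (dy t) + \<i> * complex_of_real \<omega> * Complex (x t) (y t)"

lemma norm_rotating_velocity_square:
  "(cmod (rotating_velocity \<omega> x y dx dy t))^2 = (dx t + - \<omega> * y t)^2 + (dy t + \<omega> * x t)^2"
  by (simp add: rotating_velocity_def cmod_power2)

lemma rotating_frame_primitive:
  assumes x: "H1per x dx" and y: "H1per y dy" and t: "t \<in> {0..2*pi}"
  shows "set_integrable lborel {0..t} (\<lambda>s. cis (\<omega> * s) * rotating_velocity \<omega> x y dx dy s)"
    and "(LBINT s:{0..t}. cis (\<omega> * s) * rotating_velocity \<omega> x y dx dy s)
      = cis (\<omega> * t) * Complex (x t) (y t) - Complex (x 0) (y 0)"
proof -
  have t0: "0 \<le> t" and sub: "{0..t} \<subseteq> {0..2*pi}"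
    using t by auto
  have dx: "set_integrable lborel {0..t} dx" and dy: "set_integrable lborel {0..t} dy"
    using set_integrable_subset[OF H1per_set_integrable_deriv _ sub] x y by auto
  have x_eq: "\<And>s. s \<in> {0..t} \<Longrightarrow> x s = x 0 + (LBINT r:{0..s}. dx r)"
    and y_eq: "\<And>s. s \<in> {0..t} \<Longrightarrow> y s = y 0 + (LBINT r:{0..s}. dy r)"
    using sub by (auto intro: H1per_eq_primitive x y)
  define \<phi> where "\<phi> s = cis (\<omega> * s)" for s
  define \<phi>' where "\<phi>' s = \<i> * complex_of_real \<omega> * \<phi> s" for s
  have \<phi>: "(\<phi> has_vector_derivative \<phi>' s) (at s)" for s
    unfolding \<phi>_def \<phi>'_def has_vector_derivative_def
    by (auto intro!: derivative_eq_intros simp: algebra_simps scaleR_conv_of_real)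
  have i\<phi>: "((\<lambda>s. \<i> * \<phi> s) has_vector_derivative \<i> * \<phi>' s) (at s)" for s
    using has_vector_derivative_mult_right[OF \<phi>, of \<i>] by simp
  have \<phi>'_cont: "continuous_on UNIV \<phi>'" and i\<phi>'_cont: "continuous_on UNIV (\<lambda>s. \<i> * \<phi>' s)"
    unfolding \<phi>'_def \<phi>_def by (intro continuous_intros)+
  note X = set_integral_product_rule[OF t0 dx x_eq \<phi> \<phi>'_cont]
  note Y = set_integral_product_rule[OF t0 dy y_eq i\<phi> i\<phi>'_cont]
  have eq: "cis (\<omega> * s) * rotating_velocity \<omega> x y dx dy s
      = (dx s *\<^sub>R \<phi> s + x s *\<^sub>R \<phi>' s) + (dy s *\<^sub>R (\<i> * \<phi> s) + y s *\<^sub>R (\<i> * \<phi>' s))" for s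
    by (simp add: rotating_velocity_def \<phi>'_def \<phi>_def Complex_eq scaleR_conv_of_real algebra_simps)
  show "set_integrable lborel {0..t} (\<lambda>s. cis (\<omega> * s) * rotating_velocity \<omega> x y dx dy s)"
    unfolding eq using X(1) Y(1) by (rule set_integral_add)
  have "(LBINT s:{0..t}. cis (\<omega> * s) * rotating_velocity \<omega> x y dx dy s)
      = (LBINT s:{0..t}. dx s *\<^sub>R \<phi> s + x s *\<^sub>R \<phi>' s) + (LBINT s:{0..t}. dy s *\<^sub>R (\<i> * \<phi> s) + y s *\<^sub>R (\<i> * \<phi>' s))"
    unfolding eq by (rule set_integral_add(2)[OF X(1) Y(1)])
  also have "\<dots> = cis (\<omega> * t) * Complex (x t) (y t) - Complex (x 0) (y 0)"
    by (simp only: X(2) Y(2)) (simp add: \<phi>_def Complex_eq scaleR_conv_of_real algebra_simps)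
  finally show "(LBINT s:{0..t}. cis (\<omega> * s) * rotating_velocity \<omega> x y dx dy s)
      = cis (\<omega> * t) * Complex (x t) (y t) - Complex (x 0) (y 0)" .
qed

lemma norm_rotating_frame_le:
  assumes x: "H1per x dx" and y: "H1per y dy" and t: "t \<in> {0..2*pi}"
  shows "cmod (cis (\<omega> * (2*pi)) - 1) * cmod (Complex (x t) (y t))
    \<le> (LBINT s:{0..2*pi}. cmod (rotating_velocity \<omega> x y dx dy s))"
proof -
  define V where "V s = cis (\<omega> * s) * rotating_velocity \<omega> x y dx dy s" for s
  define I where "I \<tau> = (LBINT s:{0..\<tau>}. V s)" for \<tau>
  define \<mu> where "\<mu> = cis (\<omega> * (2*pi))"
  have V: "set_integrable lborel {0..2*pi} V"
    unfolding V_def by (rule rotating_frame_primitive(1)[OF x y]) simp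
  have I_t: "I t = cis (\<omega> * t) * Complex (x t) (y t) - Complex (x 0) (y 0)"
    unfolding I_def V_def by (rule rotating_frame_primitive(2)[OF x y t])
  have I_2pi: "I (2*pi) = \<mu> * Complex (x 0) (y 0) - Complex (x 0) (y 0)"
    using rotating_frame_primitive(2)[OF x y, of "2*pi" \<omega>] H1per_periodic[OF x] H1per_periodic[OF y]
    unfolding I_def V_def \<mu>_def by simp
  \<comment> \<open>after one period the rotated loop closes up only to the monodromy factor \<open>\<mu>\<close>\<close>
  have "cmod (\<mu> - 1) * cmod (Complex (x t) (y t)) = cmod ((\<mu> - 1) * (cis (\<omega> * t) * Complex (x t) (y t)))"
    by (simp add: norm_mult)
  also have "\<dots> = cmod (\<mu> * I t + (I (2*pi) - I t))"
    unfolding I_t I_2pi by (simp add: algebra_simps)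
  also have "\<dots> \<le> cmod (I t) + cmod (I (2*pi) - I t)"
    using norm_triangle_ineq[of "\<mu> * I t"] by (simp add: norm_mult \<mu>_def)
  also have "\<dots> \<le> (LBINT s:{0..2*pi}. cmod (V s))"
    unfolding I_def by (rule norm_set_integral_split_le[OF V t])
  also have "\<dots> = (LBINT s:{0..2*pi}. cmod (rotating_velocity \<omega> x y dx dy s))"
    by (simp add: V_def norm_mult)
  finally show ?thesis
    unfolding \<mu>_def .
qed

lemma set_integrable_rotating_velocity_square:
  assumes x: "H1per x dx" and y: "H1per y dy"
  shows "set_integrable lborel {0..2*pi} (\<lambda>t. (cmod (rotating_velocity \<omega> x y dx dy t))^2)"
  unfolding norm_rotating_velocity_square
  by (intro set_integral_add H1per_set_integrable_square_add[OF x] H1per_set_integrable_square_add[OF y]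
      continuous_intros H1per_continuous_on[OF x] H1per_continuous_on[OF y])

lemma square_rotating_frame_le:
  assumes x: "H1per x dx" and y: "H1per y dy" and t: "t \<in> {0..2*pi}"
  shows "(cmod (cis (\<omega> * (2*pi)) - 1))^2 * ((x t)^2 + (y t)^2)
    \<le> 2*pi * (LBINT s:{0..2*pi}. (cmod (rotating_velocity \<omega> x y dx dy s))^2)"
proof -
  have "set_integrable lborel {0..2*pi} (\<lambda>s. cmod (cis (\<omega> * s) * rotating_velocity \<omega> x y dx dy s))"
    by (intro set_integrable_norm rotating_frame_primitive(1)[OF x y]) simp
  then have v: "set_integrable lborel {0..2*pi} (\<lambda>s. cmod (rotating_velocity \<omega> x y dx dy s))"
    by (simp add: norm_mult)
  have "(cmod (cis (\<omega> * (2*pi)) - 1))^2 * ((x t)^2 + (y t)^2)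
      = (cmod (cis (\<omega> * (2*pi)) - 1) * cmod (Complex (x t) (y t)))^2"
    by (simp add: power_mult_distrib cmod_power2)
  also have "\<dots> \<le> (LBINT s:{0..2*pi}. cmod (rotating_velocity \<omega> x y dx dy s))^2"
    using norm_rotating_frame_le[OF x y t] by (intro power_mono) auto
  also have "\<dots> \<le> 2*pi * (LBINT s:{0..2*pi}. (cmod (rotating_velocity \<omega> x y dx dy s))^2)"
    using square_set_integral_le[OF _ v set_integrable_rotating_velocity_square[OF x y]] by simp
  finally show ?thesis .
qed

lemma planar_energy_le:
  assumes x: "H1per x dx" and y: "H1per y dy" and \<omega>: "cis (\<omega> * (2*pi)) \<noteq> 1"
  shows "(LBINT t:{0..2*pi}. (x t)^2 + (dx t)^2) + (LBINT t:{0..2*pi}. (y t)^2 + (dy t)^2)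
    \<le> (2 + (1 + 2 * \<omega>^2) * (4 * pi^2) / (cmod (cis (\<omega> * (2*pi)) - 1))^2)
      * (LBINT t:{0..2*pi}. (cmod (rotating_velocity \<omega> x y dx dy t))^2)"
proof -
  define \<delta> where "\<delta> = (cmod (cis (\<omega> * (2*pi)) - 1))^2"
  define v2 where "v2 t = (cmod (rotating_velocity \<omega> x y dx dy t))^2" for t
  define K where "K = (LBINT t:{0..2*pi}. v2 t)"
  have \<delta>: "0 < \<delta>"
    using \<omega> by (simp add: \<delta>_def)
  have v2: "set_integrable lborel {0..2*pi} v2"
    unfolding v2_def by (rule set_integrable_rotating_velocity_square[OF x y])
  have const: "set_integrable lborel {0..2*pi} (\<lambda>_. C)" for C :: real
    by (rule borel_integrable_atLeastAtMost') (rule continuous_on_const)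
  have position: "(x t)^2 + (y t)^2 \<le> 2*pi*K / \<delta>" if "t \<in> {0..2*pi}" for t
    using square_rotating_frame_le[OF x y that, of \<omega>] \<delta>
    by (simp add: \<delta>_def K_def v2_def field_simps)
  have velocity: "(dx t)^2 + (dy t)^2 \<le> 2 * v2 t + 2 * \<omega>^2 * ((x t)^2 + (y t)^2)" for t
  proof -
    have "2 * v2 t + 2 * \<omega>^2 * ((x t)^2 + (y t)^2)
        = (dx t)^2 + (dy t)^2 + (dx t - 2 * \<omega> * y t)^2 + (dy t + 2 * \<omega> * x t)^2"
      unfolding v2_def norm_rotating_velocity_square by (simp add: power2_eq_square algebra_simps)
    then show ?thesis
      by (smt (verit) zero_le_power2)
  qed
  have "(LBINT t:{0..2*pi}. (x t)^2 + (dx t)^2) + (LBINT t:{0..2*pi}. (y t)^2 + (dy t)^2)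
      = (LBINT t:{0..2*pi}. ((x t)^2 + (dx t)^2) + ((y t)^2 + (dy t)^2))"
    using set_integral_add(2)[OF H1per_set_integrable_energy[OF x] H1per_set_integrable_energy[OF y]] ..
  also have "\<dots> \<le> (LBINT t:{0..2*pi}. 2 * v2 t + (1 + 2 * \<omega>^2) * (2*pi*K / \<delta>))"
  proof (rule set_integral_mono)
    show "set_integrable lborel {0..2*pi} (\<lambda>t. ((x t)^2 + (dx t)^2) + ((y t)^2 + (dy t)^2))"
      by (intro set_integral_add H1per_set_integrable_energy x y)
    show "set_integrable lborel {0..2*pi} (\<lambda>t. 2 * v2 t + (1 + 2 * \<omega>^2) * (2*pi*K / \<delta>))"
      using v2 const by (rule set_integral_add[OF set_integrable_mult_right])
    fix t assume t: "t \<in> {0..2*pi}"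
    have "2 * \<omega>^2 * ((x t)^2 + (y t)^2) \<le> 2 * \<omega>^2 * (2*pi*K / \<delta>)"
      using position[OF t] by (intro mult_left_mono) auto
    then show "((x t)^2 + (dx t)^2) + ((y t)^2 + (dy t)^2) \<le> 2 * v2 t + (1 + 2 * \<omega>^2) * (2*pi*K / \<delta>)"
      using position[OF t] velocity[of t] by (simp add: algebra_simps)
  qed
  also have "\<dots> = 2 * K + 2*pi * ((1 + 2 * \<omega>^2) * (2*pi*K / \<delta>))"
    using set_integral_add(2)[OF set_integrable_mult_right[OF v2] const]
    by (simp add: K_def set_integral_const)
  also have "\<dots> = (2 + (1 + 2 * \<omega>^2) * (4 * pi^2) / \<delta>) * K"
    by (simp add: power2_eq_square field_simps)
  finally show ?thesis
    unfolding \<delta>_def K_def v2_def .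
qed

lemma abs_le_of_mean_zero:
  fixes f g :: "real \<Rightarrow> real"
  assumes ab: "a < b" and g: "set_integrable lborel {a..b} g"
    and f: "\<And>t. t \<in> {a..b} \<Longrightarrow> f t = f a + (LBINT s:{a..t}. g s)"
    and mean: "(LBINT s:{a..b}. f s) = 0" and t: "t \<in> {a..b}"
  shows "\<bar>f t\<bar> \<le> 2 * (LBINT s:{a..b}. \<bar>g s\<bar>)"
proof -
  define B where "B = (LBINT s:{a..b}. \<bar>g s\<bar>)"
  have primitive: "\<bar>LBINT s:{a..\<tau>}. g s\<bar> \<le> B" if "\<tau> \<in> {a..b}" for \<tau>
    using norm_set_integral_split_le[OF g that] unfolding B_def real_norm_def by linarith
  have diff: "\<bar>f t - f s\<bar> \<le> 2 * B" if "s \<in> {a..b}" for s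
    using f[OF t] f[OF that] primitive[OF t] primitive[OF that] by linarith
  have fi: "set_integrable lborel {a..b} (\<lambda>s. f t - f s)"
    by (intro borel_integrable_atLeastAtMost' continuous_intros continuous_on_primitive[OF g f])
  have "(b - a) * \<bar>f t\<bar> = \<bar>LBINT s:{a..b}. f t - f s\<bar>"
    using set_integral_diff(2)[OF borel_integrable_atLeastAtMost'[OF continuous_on_const]
        borel_integrable_atLeastAtMost'[OF continuous_on_primitive[OF g f]]] mean ab
    by (simp add: set_integral_const abs_mult)
  also have "\<dots> \<le> (LBINT s:{a..b}. \<bar>f t - f s\<bar>)"
    using set_integral_norm_bound[OF fi] by simp
  also have "\<dots> \<le> (LBINT s:{a..b}. 2 * B)"
    using diff by (intro set_integral_mono set_integrable_abs[OF fi] borel_integrable_atLeastAtMost'[OF continuous_on_const]) auto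
  also have "\<dots> = (b - a) * (2 * B)"
    using ab by (simp add: set_integral_const)
  finally show ?thesis
    using ab unfolding B_def by simp
qed

lemma vertical_energy_le:
  assumes z: "H1per z dz" and mean: "(LBINT t:{0..2*pi}. z t) = 0"
  shows "(LBINT t:{0..2*pi}. (z t)^2 + (dz t)^2) \<le> (1 + 16 * pi^2) * (LBINT t:{0..2*pi}. (dz t)^2)"
proof -
  define K where "K = (LBINT t:{0..2*pi}. (dz t)^2)"
  have dz: "set_integrable lborel {0..2*pi} dz" and dz2: "set_integrable lborel {0..2*pi} (\<lambda>t. (dz t)^2)"
    using z by (rule H1per_set_integrable_deriv H1per_set_integrable_deriv_square)+
  have z2: "set_integrable lborel {0..2*pi} (\<lambda>t. (z t)^2)"
    by (intro borel_integrable_atLeastAtMost' continuous_intros H1per_continuous_on[OF z])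
  have L1: "(LBINT t:{0..2*pi}. \<bar>dz t\<bar>)^2 \<le> 2*pi * K"
    using square_set_integral_le[OF _ set_integrable_abs[OF dz]] dz2 by (simp add: K_def)
  have pointwise: "(z t)^2 \<le> 8*pi * K" if "t \<in> {0..2*pi}" for t
  proof -
    have "\<bar>z t\<bar> \<le> 2 * (LBINT t:{0..2*pi}. \<bar>dz t\<bar>)"
      by (rule abs_le_of_mean_zero[OF _ dz H1per_eq_primitive[OF z] mean that]) simp
    then have "(z t)^2 \<le> (2 * (LBINT t:{0..2*pi}. \<bar>dz t\<bar>))^2"
      by (metis abs_ge_zero power2_abs power_mono)
    with L1 show ?thesis
      by (simp add: power_mult_distrib)
  qed
  have "(LBINT t:{0..2*pi}. (z t)^2 + (dz t)^2) = (LBINT t:{0..2*pi}. (z t)^2) + K"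
    unfolding K_def by (rule set_integral_add(2)[OF z2 dz2])
  also have "(LBINT t:{0..2*pi}. (z t)^2) \<le> (LBINT t:{0..2*pi}. 8*pi * K)"
    using pointwise by (intro set_integral_mono z2 borel_integrable_atLeastAtMost'[OF continuous_on_const]) auto
  also have "(LBINT t:{0..2*pi}. 8*pi * K) = 16 * pi^2 * K"
    by (simp add: set_integral_const power2_eq_square)
  finally show ?thesis
    unfolding K_def by (simp add: algebra_simps)
qed

lemma cis_ne_1_of_not_int:
  assumes "\<omega> \<notin> \<int>"
  shows "cis (\<omega> * (2*pi)) \<noteq> 1"
proof
  assume "cis (\<omega> * (2*pi)) = 1"
  then have "cos (\<omega> * (2*pi)) = 1"
    by (simp add: complex_eq_iff)
  then obtain n :: int where "\<omega> * (2*pi) = n * 2 * pi"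
    by (auto simp: cos_one_2pi_int)
  then have "\<omega> = n"
    by simp
  with assms show False
    by simp
qed

definition coercivity_constant :: "real \<Rightarrow> real" where
  "coercivity_constant \<omega> = 2 + 16 * pi^2 + (1 + 2 * \<omega>^2) * (4 * pi^2) / (cmod (cis (\<omega> * (2*pi)) - 1))^2"

definition kinetic_integral :: "real \<Rightarrow> (nat \<Rightarrow> real \<Rightarrow> real) \<Rightarrow> (nat \<Rightarrow> real \<Rightarrow> real) \<Rightarrow> real" where
  "kinetic_integral \<omega> Q D =
     (LBINT t:{0..2*pi}. (cmod (rotating_velocity \<omega> (Q 0) (Q 1) (D 0) (D 1) t))^2) + (LBINT t:{0..2*pi}. (D 2 t)^2)"

lemma body_energy_le:
  assumes H: "\<And>k. k < 3 \<Longrightarrow> H1per (Q k) (D k)"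
    and mean: "(LBINT t=0..2*pi. Q 2 t) = 0" and \<omega>: "\<omega> \<notin> \<int>"
  shows "(\<Sum>k<3. LBINT t=0..2*pi. (Q k t)^2 + (D k t)^2) \<le> coercivity_constant \<omega> * kinetic_integral \<omega> Q D"
proof -
  define K where "K = (LBINT t:{0..2*pi}. (cmod (rotating_velocity \<omega> (Q 0) (Q 1) (D 0) (D 1) t))^2)"
  define Kz where "Kz = (LBINT t:{0..2*pi}. (D 2 t)^2)"
  define r where "r = (1 + 2 * \<omega>^2) * (4 * pi^2) / (cmod (cis (\<omega> * (2*pi)) - 1))^2"
  have K: "0 \<le> K" and Kz: "0 \<le> Kz" and r: "0 \<le> r"
    unfolding K_def Kz_def r_def set_lebesgue_integral_def
    by (auto intro!: integral_nonneg_AE)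
  have Icc: "(LBINT t=0..2*pi. f t) = (LBINT t:{0..2*pi}. f t)" for f :: "real \<Rightarrow> real"
    by (simp add: interval_integral_Icc zero_ereal_def)
  have "(\<Sum>k<3. LBINT t=0..2*pi. (Q k t)^2 + (D k t)^2)
      = ((LBINT t:{0..2*pi}. (Q 0 t)^2 + (D 0 t)^2) + (LBINT t:{0..2*pi}. (Q 1 t)^2 + (D 1 t)^2))
        + (LBINT t:{0..2*pi}. (Q 2 t)^2 + (D 2 t)^2)"
    by (simp add: Icc insert_commute lessThan_nat_numeral)
  also have "\<dots> \<le> (2 + r) * K + (1 + 16 * pi^2) * Kz"
    using planar_energy_le[OF H H cis_ne_1_of_not_int[OF \<omega>]] vertical_energy_le[OF H] mean
    unfolding K_def Kz_def r_def by (intro add_mono) (simp_all add: Icc)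
  also have "\<dots> \<le> coercivity_constant \<omega> * (K + Kz)"
    using K Kz r mult_right_mono[of "1 + 16 * pi^2" "coercivity_constant \<omega>" Kz]
      mult_right_mono[of "2 + r" "coercivity_constant \<omega>" K]
    by (simp add: coercivity_constant_def r_def distrib_left)
  finally show ?thesis
    unfolding kinetic_integral_def K_def Kz_def .
qed

lemma action_ge_kinetic_integral:
  assumes L: "in_Lambda N q dq"
  shows "ennreal (1/2 * (\<Sum>i<N. kinetic_integral \<omega> (q i) (dq i))) \<le> action \<omega> N q dq (2*pi)"
proof -
  define k where "k i t = indicator {0..2*pi} t *
    ((cmod (rotating_velocity \<omega> (q i 0) (q i 1) (dq i 0) (dq i 1) t))^2 + (dq i 2 t)^2)" for i t
  have H: "H1per (q i j) (dq i j)" if "i < N" "j < 3" for i j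
    using L that unfolding in_Lambda_def by blast
  have k: "integrable lborel (k i)" "integral\<^sup>L lborel (k i) = kinetic_integral \<omega> (q i) (dq i)" if "i < N" for i
  proof -
    have "set_integrable lborel {0..2*pi} (\<lambda>t. (cmod (rotating_velocity \<omega> (q i 0) (q i 1) (dq i 0) (dq i 1) t))^2)"
      using that by (intro set_integrable_rotating_velocity_square H) simp_all
    moreover have "set_integrable lborel {0..2*pi} (\<lambda>t. (dq i 2 t)^2)"
      using H[OF that, of 2] by (simp add: H1per_set_integrable_deriv_square)
    ultimately show "integrable lborel (k i)" "integral\<^sup>L lborel (k i) = kinetic_integral \<omega> (q i) (dq i)"
      using set_integral_add[of lborel "{0..2*pi}"]
      unfolding set_integrable_def set_lebesgue_integral_def kinetic_integral_def k_def
      by (simp_all add: algebra_simps)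
  qed
  have kinetic: "kinetic \<omega> N q dq t * indicator {0..2*pi} t = 1/2 * (\<Sum>i<N. k i t)" for t
    by (simp add: kinetic_def rotating_velocity_def k_def sum_distrib_left sum_distrib_right algebra_simps)
  have "1/2 * (\<Sum>i<N. kinetic_integral \<omega> (q i) (dq i)) = (\<integral>t. kinetic \<omega> N q dq t * indicator {0..2*pi} t \<partial>lborel)"
    unfolding kinetic using k by (simp add: Bochner_Integration.integral_sum)
  also have "ennreal \<dots> = (\<integral>\<^sup>+t. ennreal (kinetic \<omega> N q dq t * indicator {0..2*pi} t) \<partial>lborel)"
  proof (rule nn_integral_eq_integral[symmetric])
    show "integrable lborel (\<lambda>t. kinetic \<omega> N q dq t * indicator {0..2*pi} t)"
      unfolding kinetic using k by (intro integrable_mult_right Bochner_Integration.integrable_sum) auto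
    show "AE t in lborel. 0 \<le> kinetic \<omega> N q dq t * indicator {0..2*pi} t"
      unfolding kinetic k_def by (intro AE_I2 mult_nonneg_nonneg sum_nonneg) auto
  qed
  also have "\<dots> \<le> action \<omega> N q dq (2*pi)"
    unfolding action_def by (intro nn_integral_mono) (auto simp: indicator_def)
  finally show ?thesis .
qed

lemma H1norm_square_le:
  assumes \<omega>: "\<omega> \<notin> \<int>" and L: "in_Lambda N q dq"
    and mean: "\<And>i. i < N \<Longrightarrow> (LBINT t=0..2*pi. q i 2 t) = 0"
  shows "(H1norm N q dq)^2 \<le> coercivity_constant \<omega> * (\<Sum>i<N. kinetic_integral \<omega> (q i) (dq i))"
proof -
  have "0 \<le> (LBINT t:{0..2*pi}. (q i k t)^2 + (dq i k t)^2)" for i k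
    unfolding set_lebesgue_integral_def by (intro integral_nonneg_AE) auto
  then have "0 \<le> (LBINT t=0..2*pi. (q i k t)^2 + (dq i k t)^2)" for i k
    by (simp add: interval_integral_Icc zero_ereal_def)
  then have "(H1norm N q dq)^2 = (\<Sum>i<N. \<Sum>k<3. LBINT t=0..2*pi. (q i k t)^2 + (dq i k t)^2)"
    unfolding H1norm_def by (simp add: sum_nonneg)
  also have "\<dots> \<le> (\<Sum>i<N. coercivity_constant \<omega> * kinetic_integral \<omega> (q i) (dq i))"
    using L mean \<omega> unfolding in_Lambda_def by (intro sum_mono body_energy_le) auto
  finally show ?thesis
    by (simp add: sum_distrib_left)
qed

theorem lemma5p1:
  fixes N :: nat and \<omega> :: real
    and q dq :: "nat \<Rightarrow> nat \<Rightarrow> nat \<Rightarrow> real \<Rightarrow> real"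
  assumes "2 \<le> N"
    and "\<omega> \<notin> \<int>"
    and "\<And>n. in_Lambda N (q n) (dq n)"
    and "\<And>n i. i < N \<Longrightarrow> (LBINT t=0..2*pi. q n i 2 t) = 0"
    and "filterlim (\<lambda>n. H1norm N (q n) (dq n)) at_top sequentially"
  shows "((\<lambda>n. action \<omega> N (q n) (dq n) (2*pi)) \<longlongrightarrow> top) sequentially"
proof -
  define S where "S n = (\<Sum>i<N. kinetic_integral \<omega> (q n i) (dq n i))" for n
  define C where "C = coercivity_constant \<omega>"
  have C: "0 < C"
    unfolding C_def coercivity_constant_def by (intro add_pos_nonneg) auto
  have "filterlim (\<lambda>n. (H1norm N (q n) (dq n))^2) at_top sequentially"
    by (rule filterlim_pow_at_top[OF _ assms(5)]) simp
  then have "filterlim (\<lambda>n. C * S n) at_top sequentially"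
    by (rule filterlim_at_top_mono)
      (use H1norm_square_le[OF assms(2,3,4)] in \<open>simp add: C_def S_def\<close>)
  then have "filterlim (\<lambda>n. (1 / (2 * C)) * (C * S n)) at_top sequentially"
    using C by (intro filterlim_tendsto_pos_mult_at_top[OF tendsto_const[of "1 / (2 * C)"]]) auto
  moreover have "(1 / (2 * C)) * (C * S n) = 1/2 * S n" for n
    using C by simp
  ultimately have lim: "((\<lambda>n. ennreal (1/2 * S n)) \<longlongrightarrow> top) sequentially"
    by (simp only: ennreal_tendsto_top_eq_at_top)
  have "ennreal (1/2 * S n) \<le> action \<omega> N (q n) (dq n) (2*pi)" for n
    unfolding S_def by (rule action_ge_kinetic_integral[OF assms(3)])
  then show ?thesis
    by (intro tendsto_sandwich[OF always_eventually always_eventually lim tendsto_const]) simp_all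
qed

end
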